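(* Let $\theta_i\in(0,2)$, $\alpha_i>0$, $\gamma_i>0$ and $0<\gamma_i\beta<1/\lambda_{\max}(L)$ for all $i=1,\dots,m$. Then the matrices $\mathbf H=QM^{-1}$ and $\mathbf D=Q^\top+Q-M^\top\mathbf HM$ satisfy $\mathbf H\succcurlyeq\mathbf D\succ0$.
   Context: Let $m\ge2$, $n_1,\dots,n_m\ge1$, $p,q\ge0$ integers, $n=\sum_in_i$. $L\in\mathbb R^{m\times m}$ satisfies $L=U^\top U$ with $U\in\mathbb R^{r\times m}$ of full row rank and $U\mathbf 1_m=0$ (and $L$ is compatible with a connected undirected graph on $m$ nodes, with $\mathrm{null}(L)=\mathrm{span}\{\mathbf 1_m\}$). $\mathbf U=U\otimes I_{p+q}$. Parameters $\theta_i,\alpha_i,\gamma_i>0$, $\beta>0$; $\Theta=\mathrm{diag}(\theta_1I_{n_1},\dots,\theta_mI_{n_m})$, $\Upsilon=\mathrm{diag}(\alpha_1I_{n_1},\dots,\alpha_mI_{n_m})$, $\Gamma=\mathrm{diag}(\gamma_1I_{p+q},\dots,\gamma_mI_{p+q})$; $Q=\begin{pmatrix}\Upsilon^{-1}&0&0\\0&\Gamma^{-1}&-\mathbf U^\top\\0&0&\frac1\beta I_{r(p+q)}\end{pmatrix}$, $M=\begin{pmatrix}\Theta&0&0\\0&I_{m(p+q)}&-\Gamma\mathbf U^\top\\0&0&I_{r(p+q)}\end{pmatrix}$. $A\succcurlyeq B$ means $A-B$ is symmetric positive semidefinite; $\succ0$ means symmetric positive definite. *)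

theory Defs
  imports "Jordan_Normal_Form.Matrix" "Jordan_Normal_Form.Char_Poly"
    "Jordan_Normal_Form.Gauss_Jordan_Elimination" "Jordan_Normal_Form.DL_Rank"
    "Jordan_Normal_Form.Matrix_Kernel"
begin

definition kron :: "'a :: semiring_0 mat \<Rightarrow> 'a mat \<Rightarrow> 'a mat" where
  "kron A B = mat (dim_row A * dim_row B) (dim_col A * dim_col B)
     (\<lambda>(i, j). A $$ (i div dim_row B, j div dim_col B) * B $$ (i mod dim_row B, j mod dim_col B))"

text \<open>3x3 block matrix built from nine blocks (row-major).\<close>
definition block3 :: "'a :: zero mat \<Rightarrow> 'a mat \<Rightarrow> 'a mat \<Rightarrow> 'a mat \<Rightarrow> 'a mat \<Rightarrow> 'a mat
     \<Rightarrow> 'a mat \<Rightarrow> 'a mat \<Rightarrow> 'a mat \<Rightarrow> 'a mat" where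
  "block3 A11 A12 A13 A21 A22 A23 A31 A32 A33 =
     four_block_mat A11
       (four_block_mat A12 A13 (0\<^sub>m 0 (dim_col A12)) (0\<^sub>m 0 (dim_col A13)))
       (four_block_mat A21 (0\<^sub>m (dim_row A21) 0) A31 (0\<^sub>m (dim_row A31) 0))
       (four_block_mat A22 A23 A32 A33)"

text \<open>Inverse of a square matrix (meaningful when it is invertible).\<close>
definition mat_inv :: "'a :: field mat \<Rightarrow> 'a mat" where
  "mat_inv A = the (mat_inverse A)"

definition psd :: "real mat \<Rightarrow> bool" where
  "psd A \<longleftrightarrow> square_mat A \<and> transpose_mat A = A \<and>
     (\<forall>v \<in> carrier_vec (dim_row A). 0 \<le> v \<bullet> (A *\<^sub>v v))"

definition pd :: "real mat \<Rightarrow> bool" where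
  "pd A \<longleftrightarrow> square_mat A \<and> transpose_mat A = A \<and>
     (\<forall>v \<in> carrier_vec (dim_row A). v \<noteq> 0\<^sub>v (dim_row A) \<longrightarrow> 0 < v \<bullet> (A *\<^sub>v v))"

definition loewner_ge :: "real mat \<Rightarrow> real mat \<Rightarrow> bool" where
  "loewner_ge A B \<longleftrightarrow> dim_row A = dim_row B \<and> dim_col A = dim_col B \<and> psd (A - B)"

definition lambda_max :: "real mat \<Rightarrow> real" where
  "lambda_max A = Max {k. eigenvalue A k}"

end

(*
  Since the off-diagonal corners of Q and M vanish, both are block-diagonal with respect to
  the first block. With Hd = diag(Upsilon^-1 Theta^-1, Gamma^-1, I/beta) one checks Hd M = Q, and
  M is upper triangular with diagonal entries theta_i and 1, hence invertible; so H = Q M^-1 = Hd.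
  Because H M = Q we get M^T H M = M^T Q and a block computation gives
    D = diag(Upsilon^-1 (2 - Theta), Gamma^-1, I/beta - UU Gamma UU^T),
    H - D = diag(Upsilon^-1 Theta^-1 (1 - Theta)^2, 0, UU Gamma UU^T),
  where UU = U (x) I. The first two blocks of D and all blocks of H - D are clearly (semi)definite.
  For the last block of D, lambda_max(L) bounds the Rayleigh quotient of L = U^T U (a maximiser of
  the quadratic form on the unit sphere is an eigenvector), hence |U y|^2 <= lambda_max(L) |y|^2;
  this passes to U (x) I and to its transpose, and then
  v^T UU Gamma UU^T v <= max gamma_i lambda_max(L) |v|^2 < |v|^2 / beta.
*)

theory Submission
  imports Defs "HOL-Analysis.Function_Topology"
begin

section \<open>Diagonal and block-diagonal matrices\<close>

lemma index_mat_diag [simp]: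
  "i < n \<Longrightarrow> j < n \<Longrightarrow> mat_diag n f $$ (i, j) = (if i = j then f i else 0)"
  "dim_row (mat_diag n f) = n" "dim_col (mat_diag n f) = n"
  unfolding mat_diag_def by auto

lemma transpose_mat_diag [simp]: "transpose_mat (mat_diag n f) = mat_diag n f"
  by (rule eq_matI) auto

lemma mat_diag_add: "mat_diag n f + mat_diag n g = mat_diag n (\<lambda>i. f i + g i :: 'a :: monoid_add)"
  by (rule eq_matI) auto

lemma mat_diag_minus: "mat_diag n f - mat_diag n g = mat_diag n (\<lambda>i. f i - g i :: 'a :: group_add)"
  by (rule eq_matI) auto

lemma mat_diag_cong: "(\<And>i. i < n \<Longrightarrow> f i = g i) \<Longrightarrow> mat_diag n f = mat_diag n g"
  by (rule eq_matI) auto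

lemma smult_one_mat_eq_mat_diag: "c \<cdot>\<^sub>m 1\<^sub>m n = mat_diag n (\<lambda>_. c :: 'a :: semiring_1)"
  by (rule eq_matI) auto

lemma diag_mat_mat_diag: "diag_mat (mat_diag n f) = map f [0..<n]"
  by (rule nth_equalityI) (auto simp: diag_mat_def)

lemma upper_triangular_mat_diag: "upper_triangular (mat_diag n f)"
  by (rule upper_triangularI) auto

lemma mat_diag_mult_vec:
  "x \<in> carrier_vec n \<Longrightarrow> mat_diag n f *\<^sub>v x = vec n (\<lambda>i. f i * x $ i :: 'a :: semiring_0)"
  by (rule eq_vecI) (auto simp: mat_diag_def mult_mat_vec_def scalar_prod_def row_def
      if_distrib[of "\<lambda>a. a * _"] cong: if_cong)

lemma quadratic_form_mat_diag:
  fixes f :: "nat \<Rightarrow> real"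
  assumes "x \<in> carrier_vec n"
  shows "x \<bullet> (mat_diag n f *\<^sub>v x) = (\<Sum>i<n. f i * (x $ i)\<^sup>2)"
  using assms by (simp add: mat_diag_mult_vec scalar_prod_def atLeast0LessThan power2_eq_square
      mult.left_commute)

lemma psd_quadratic_form_nonneg:
  "psd A \<Longrightarrow> x \<in> carrier_vec (dim_row A) \<Longrightarrow> 0 \<le> x \<bullet> (A *\<^sub>v x)"
  unfolding psd_def by blast

lemma pd_quadratic_form_pos:
  "pd A \<Longrightarrow> x \<in> carrier_vec (dim_row A) \<Longrightarrow> x \<noteq> 0\<^sub>v (dim_row A) \<Longrightarrow> 0 < x \<bullet> (A *\<^sub>v x)"
  unfolding pd_def by blast

lemma pd_imp_psd:
  assumes "pd A"
  shows "psd A"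
  unfolding psd_def
proof (intro conjI ballI)
  fix x :: "real vec"
  assume x: "x \<in> carrier_vec (dim_row A)"
  show "0 \<le> x \<bullet> (A *\<^sub>v x)"
  proof (cases "x = 0\<^sub>v (dim_row A)")
    case True
    have "A *\<^sub>v x \<in> carrier_vec (dim_row A)" by (simp add: carrier_vecI)
    then show ?thesis using True by simp
  qed (use pd_quadratic_form_pos[OF assms x] in simp)
qed (use assms in \<open>auto simp: pd_def\<close>)

lemma psd_mat_diag: "(\<And>i. i < n \<Longrightarrow> 0 \<le> f i) \<Longrightarrow> psd (mat_diag n f)"
  unfolding psd_def by (auto simp: quadratic_form_mat_diag intro!: sum_nonneg)

lemma pd_mat_diag:
  assumes pos: "\<And>i. i < n \<Longrightarrow> 0 < f i"
  shows "pd (mat_diag n f)"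
  unfolding pd_def
proof (intro conjI ballI impI)
  fix x :: "real vec"
  assume "x \<in> carrier_vec (dim_row (mat_diag n f))" and "x \<noteq> 0\<^sub>v (dim_row (mat_diag n f))"
  then have x: "x \<in> carrier_vec n" and "x \<noteq> 0\<^sub>v n" by auto
  then obtain i where i: "i < n" "x $ i \<noteq> 0"
    by (metis carrier_vecD eq_vecI index_zero_vec(1,2))
  have nonneg: "0 \<le> f j * (x $ j)\<^sup>2" if "j < n" for j
    using pos[OF that] by simp
  have "0 < f i * (x $ i)\<^sup>2" using pos i by simp
  also have "\<dots> \<le> (\<Sum>j<n. f j * (x $ j)\<^sup>2)"
    by (rule member_le_sum) (use nonneg i in auto)
  finally show "0 < x \<bullet> (mat_diag n f *\<^sub>v x)" by (simp add: quadratic_form_mat_diag[OF x])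
qed auto

lemma scalar_prod_self_pos:
  fixes v :: "real vec"
  assumes "v \<in> carrier_vec n" "v \<noteq> 0\<^sub>v n"
  shows "0 < v \<bullet> v"
  using pd_quadratic_form_pos[OF pd_mat_diag[of n "\<lambda>_. 1"]] assms by simp

lemma quadratic_form_smult_one:
  fixes a :: real
  assumes "v \<in> carrier_vec n"
  shows "v \<bullet> ((a \<cdot>\<^sub>m 1\<^sub>m n) *\<^sub>v v) = a * (v \<bullet> v)"
  unfolding smult_one_mat_eq_mat_diag quadratic_form_mat_diag[OF assms]
  using assms by (simp add: scalar_prod_def sum_distrib_left atLeast0LessThan power2_eq_square)

lemma mult_four_block_diag:
  assumes "A \<in> carrier_mat n1 k1" "B \<in> carrier_mat n2 k2" "C \<in> carrier_mat k1 l1" "D \<in> carrier_mat k2 l2"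
  shows "four_block_mat A (0\<^sub>m n1 k2) (0\<^sub>m n2 k1) B * four_block_mat C (0\<^sub>m k1 l2) (0\<^sub>m k2 l1) D
    = four_block_mat (A * C) (0\<^sub>m n1 l2) (0\<^sub>m n2 l1) (B * D :: 'a :: semiring_0 mat)"
  using assms by (subst mult_four_block_mat) auto

lemma add_four_block_diag:
  assumes "A \<in> carrier_mat n1 k1" "B \<in> carrier_mat n2 k2" "C \<in> carrier_mat n1 k1" "D \<in> carrier_mat n2 k2"
  shows "four_block_mat A (0\<^sub>m n1 k2) (0\<^sub>m n2 k1) B + four_block_mat C (0\<^sub>m n1 k2) (0\<^sub>m n2 k1) D
    = four_block_mat (A + C) (0\<^sub>m n1 k2) (0\<^sub>m n2 k1) (B + D :: 'a :: monoid_add mat)"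
  using assms by (intro eq_matI) auto

lemma minus_four_block_diag:
  assumes "A \<in> carrier_mat n1 k1" "B \<in> carrier_mat n2 k2" "C \<in> carrier_mat n1 k1" "D \<in> carrier_mat n2 k2"
  shows "four_block_mat A (0\<^sub>m n1 k2) (0\<^sub>m n2 k1) B - four_block_mat C (0\<^sub>m n1 k2) (0\<^sub>m n2 k1) D
    = four_block_mat (A - C) (0\<^sub>m n1 k2) (0\<^sub>m n2 k1) (B - D :: 'a :: group_add mat)"
  using assms by (intro eq_matI) auto

lemma transpose_four_block_diag:
  assumes "A \<in> carrier_mat n1 k1" "B \<in> carrier_mat n2 k2"
  shows "transpose_mat (four_block_mat A (0\<^sub>m n1 k2) (0\<^sub>m n2 k1) B)
    = four_block_mat (transpose_mat A) (0\<^sub>m k1 n2) (0\<^sub>m k2 n1) (transpose_mat B)"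
  using assms by (subst transpose_four_block_mat) auto

lemma quadratic_form_four_block_diag:
  fixes A B :: "real mat"
  assumes A: "A \<in> carrier_mat a a" and B: "B \<in> carrier_mat b b" and v: "v \<in> carrier_vec (a + b)"
  shows "v \<bullet> (four_block_mat A (0\<^sub>m a b) (0\<^sub>m b a) B *\<^sub>v v)
    = vec_first v a \<bullet> (A *\<^sub>v vec_first v a) + vec_last v b \<bullet> (B *\<^sub>v vec_last v b)"
proof -
  define x y where "x = vec_first v a" and "y = vec_last v b"
  have x: "x \<in> carrier_vec a" and y: "y \<in> carrier_vec b" unfolding x_def y_def by auto
  have v_eq: "v = x @\<^sub>v y" using v unfolding x_def y_def by simp
  show ?thesis
    unfolding x_def[symmetric] y_def[symmetric] unfolding v_eq mult_mat_vec_split[OF A B x y]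
    by (rule scalar_prod_append[OF x y mult_mat_vec_carrier[OF A x] mult_mat_vec_carrier[OF B y]])
qed

lemma psd_four_block_diag:
  assumes A: "A \<in> carrier_mat a a" and B: "B \<in> carrier_mat b b" and pA: "psd A" and pB: "psd B"
  shows "psd (four_block_mat A (0\<^sub>m a b) (0\<^sub>m b a) B)"
  unfolding psd_def
proof (intro conjI ballI)
  fix v :: "real vec"
  assume "v \<in> carrier_vec (dim_row (four_block_mat A (0\<^sub>m a b) (0\<^sub>m b a) B))"
  then have v: "v \<in> carrier_vec (a + b)" using A B by auto
  have "0 \<le> vec_first v a \<bullet> (A *\<^sub>v vec_first v a)" "0 \<le> vec_last v b \<bullet> (B *\<^sub>v vec_last v b)"
    using psd_quadratic_form_nonneg[OF pA] psd_quadratic_form_nonneg[OF pB] A B by auto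
  then show "0 \<le> v \<bullet> (four_block_mat A (0\<^sub>m a b) (0\<^sub>m b a) B *\<^sub>v v)"
    unfolding quadratic_form_four_block_diag[OF A B v] by linarith
next
  show "square_mat (four_block_mat A (0\<^sub>m a b) (0\<^sub>m b a) B)" using A B by simp
  have "transpose_mat A = A" "transpose_mat B = B" using pA pB unfolding psd_def by auto
  then show "transpose_mat (four_block_mat A (0\<^sub>m a b) (0\<^sub>m b a) B) = four_block_mat A (0\<^sub>m a b) (0\<^sub>m b a) B"
    using A B by (simp add: transpose_four_block_diag)
qed

lemma pd_four_block_diag:
  assumes A: "A \<in> carrier_mat a a" and B: "B \<in> carrier_mat b b" and pA: "pd A" and pB: "pd B"
  shows "pd (four_block_mat A (0\<^sub>m a b) (0\<^sub>m b a) B)"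
  unfolding pd_def
proof (intro conjI ballI impI)
  fix v :: "real vec"
  assume "v \<in> carrier_vec (dim_row (four_block_mat A (0\<^sub>m a b) (0\<^sub>m b a) B))"
    and "v \<noteq> 0\<^sub>v (dim_row (four_block_mat A (0\<^sub>m a b) (0\<^sub>m b a) B))"
  then have v: "v \<in> carrier_vec (a + b)" and v0: "v \<noteq> 0\<^sub>v (a + b)" using A B by auto
  have "vec_first v a \<noteq> 0\<^sub>v a \<or> vec_last v b \<noteq> 0\<^sub>v b"
  proof (rule ccontr)
    assume "\<not> ?thesis"
    then have "v = 0\<^sub>v a @\<^sub>v 0\<^sub>v b" using vec_first_last_append[OF v] by simp
    also have "\<dots> = 0\<^sub>v (a + b)" by (rule eq_vecI) auto
    finally show False using v0 by contradiction
  qed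
  moreover have "0 \<le> vec_first v a \<bullet> (A *\<^sub>v vec_first v a)" "0 \<le> vec_last v b \<bullet> (B *\<^sub>v vec_last v b)"
    using psd_quadratic_form_nonneg[OF pd_imp_psd[OF pA]] psd_quadratic_form_nonneg[OF pd_imp_psd[OF pB]]
      A B by auto
  moreover have "vec_first v a \<noteq> 0\<^sub>v a \<Longrightarrow> 0 < vec_first v a \<bullet> (A *\<^sub>v vec_first v a)"
    "vec_last v b \<noteq> 0\<^sub>v b \<Longrightarrow> 0 < vec_last v b \<bullet> (B *\<^sub>v vec_last v b)"
    using pd_quadratic_form_pos[OF pA] pd_quadratic_form_pos[OF pB] A B by auto
  ultimately show "0 < v \<bullet> (four_block_mat A (0\<^sub>m a b) (0\<^sub>m b a) B *\<^sub>v v)"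
    unfolding quadratic_form_four_block_diag[OF A B v] by linarith
next
  show "square_mat (four_block_mat A (0\<^sub>m a b) (0\<^sub>m b a) B)" using A B by simp
  have "transpose_mat A = A" "transpose_mat B = B" using pA pB unfolding pd_def by auto
  then show "transpose_mat (four_block_mat A (0\<^sub>m a b) (0\<^sub>m b a) B) = four_block_mat A (0\<^sub>m a b) (0\<^sub>m b a) B"
    using A B by (simp add: transpose_four_block_diag)
qed

lemma block3_zero_corner:
  assumes "A \<in> carrier_mat a a" "B \<in> carrier_mat b b" "C \<in> carrier_mat b c"
    "D \<in> carrier_mat c b" "E \<in> carrier_mat c c"
  shows "block3 A (0\<^sub>m a b) (0\<^sub>m a c) (0\<^sub>m b a) B C (0\<^sub>m c a) D E
    = four_block_mat A (0\<^sub>m a (b + c)) (0\<^sub>m (b + c) a) (four_block_mat B C D E)"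
  unfolding block3_def using assms four_block_zero_mat[of a b 0 c] four_block_zero_mat[of b 0 c 0]
  by simp

section \<open>Congruence transformations\<close>

lemma transpose_congruence:
  fixes W P :: "'a :: comm_semiring_0 mat"
  assumes W: "W \<in> carrier_mat c b" and P: "P \<in> carrier_mat b b"
  shows "transpose_mat (W * P * transpose_mat W) = W * transpose_mat P * transpose_mat W"
proof -
  have "transpose_mat (W * P * transpose_mat W) = transpose_mat (transpose_mat W) * transpose_mat (W * P)"
    by (rule transpose_mult[of _ c b]) (use W P in auto)
  also have "\<dots> = W * (transpose_mat P * transpose_mat W)"
    using W P by (simp add: transpose_mult[of W c b P b])
  also have "\<dots> = W * transpose_mat P * transpose_mat W"
    using W P by simp
  finally show ?thesis .
qed

lemma quadratic_form_congruence:
  fixes W P :: "'a :: comm_semiring_0 mat"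
  assumes W: "W \<in> carrier_mat c b" and P: "P \<in> carrier_mat b b" and v: "v \<in> carrier_vec c"
  shows "v \<bullet> ((W * P * transpose_mat W) *\<^sub>v v)
    = (transpose_mat W *\<^sub>v v) \<bullet> (P *\<^sub>v (transpose_mat W *\<^sub>v v))"
proof -
  have z: "transpose_mat W *\<^sub>v v \<in> carrier_vec b" using W v by simp
  have "(W * P * transpose_mat W) *\<^sub>v v = W *\<^sub>v (P *\<^sub>v (transpose_mat W *\<^sub>v v))"
    using W P v by (simp add: assoc_mult_mat_vec[of _ c b _ c])
  then show ?thesis
    using transpose_vec_mult_scalar[OF W mult_mat_vec_carrier[OF P z] v] by simp
qed

lemma psd_congruence:
  fixes W P :: "real mat"
  assumes W: "W \<in> carrier_mat c b" and P: "P \<in> carrier_mat b b" and "psd P"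
  shows "psd (W * P * transpose_mat W)"
  unfolding psd_def
proof (intro conjI ballI)
  fix v :: "real vec"
  assume "v \<in> carrier_vec (dim_row (W * P * transpose_mat W))"
  then have v: "v \<in> carrier_vec c" using W by simp
  have "transpose_mat W *\<^sub>v v \<in> carrier_vec (dim_row P)" using W P v by simp
  then show "0 \<le> v \<bullet> (W * P * transpose_mat W *\<^sub>v v)"
    unfolding quadratic_form_congruence[OF W P v] by (rule psd_quadratic_form_nonneg[OF \<open>psd P\<close>])
next
  show "transpose_mat (W * P * transpose_mat W) = W * P * transpose_mat W"
    using transpose_congruence[OF W P] \<open>psd P\<close> unfolding psd_def by simp
qed (use W in simp)

section \<open>The largest eigenvalue bounds the Rayleigh quotient\<close>

lemma quadratic_nonpos_imp_linear_coeff_zero: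
  fixes a b :: real
  assumes nonpos: "\<And>t. 2 * t * a + t\<^sup>2 * b \<le> 0"
  shows "a = 0"
proof -
  define c where "c = \<bar>b\<bar> + 1"
  have c: "c > 0" "2 * c + b > 0" unfolding c_def by auto
  have "c\<^sup>2 * (2 * (a / c) * a + (a / c)\<^sup>2 * b) \<le> 0"
    using nonpos[of "a / c"] by (simp add: mult_nonneg_nonpos)
  also have "c\<^sup>2 * (2 * (a / c) * a + (a / c)\<^sup>2 * b) = a\<^sup>2 * (2 * c + b)"
    using c by (simp add: field_simps power2_eq_square)
  finally have "a\<^sup>2 \<le> 0" using c by (simp add: mult_le_0_iff)
  then show ?thesis by simp
qed

text \<open>Vectors of \<open>\<real>\<^sup>k\<close> are modelled as functions \<open>nat \<Rightarrow> real\<close> vanishing from \<open>k\<close> on, so that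
  compactness of the unit sphere follows from Tychonoff's theorem for the product topology.\<close>

lemma compact_unit_sphere_fun:
  "compact {f :: nat \<Rightarrow> real. (\<forall>i\<ge>k. f i = 0) \<and> (\<Sum>i<k. (f i)\<^sup>2) = 1}"
proof -
  let ?box = "PiE UNIV (\<lambda>i::nat. if i < k then {-1..1::real} else {0})"
  have "compactin (product_topology (\<lambda>i. euclidean) UNIV) ?box"
    by (subst compactin_PiE) (auto simp: compactin_euclidean_iff)
  then have "compact ?box" by (simp add: euclidean_product_topology compactin_euclidean_iff)
  moreover have "closed {f :: nat \<Rightarrow> real. (\<Sum>i<k. (f i)\<^sup>2) = 1}"
    by (intro closed_Collect_eq continuous_intros continuous_on_product_then_coordinatewise
        continuous_on_id)
  moreover have "{f. (\<forall>i\<ge>k. f i = 0) \<and> (\<Sum>i<k. (f i)\<^sup>2) = 1} = ?box \<inter> {f. (\<Sum>i<k. (f i)\<^sup>2) = 1}"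
  proof (intro equalityI subsetI)
    fix f :: "nat \<Rightarrow> real"
    assume f: "f \<in> {f. (\<forall>i\<ge>k. f i = 0) \<and> (\<Sum>i<k. (f i)\<^sup>2) = 1}"
    have "\<bar>f i\<bar> \<le> 1" if "i < k" for i
    proof -
      have "(f i)\<^sup>2 \<le> (\<Sum>i<k. (f i)\<^sup>2)" by (rule member_le_sum) (use that in auto)
      then show ?thesis using f by (simp add: abs_square_le_1)
    qed
    then show "f \<in> ?box \<inter> {f. (\<Sum>i<k. (f i)\<^sup>2) = 1}"
      using f by (simp add: PiE_UNIV_domain Pi_iff abs_le_iff)
  next
    fix f :: "nat \<Rightarrow> real"
    assume f: "f \<in> ?box \<inter> {f. (\<Sum>i<k. (f i)\<^sup>2) = 1}"
    have "f i = 0" if "k \<le> i" for i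
      using f that by (simp add: PiE_UNIV_domain Pi_iff) (metis empty_iff insert_iff not_le)
    then show "f \<in> {f. (\<forall>i\<ge>k. f i = 0) \<and> (\<Sum>i<k. (f i)\<^sup>2) = 1}" using f by simp
  qed
  ultimately show ?thesis by (simp add: compact_Int_closed)
qed

lemma quadratic_form_attains_max_on_sphere:
  fixes a :: "nat \<Rightarrow> nat \<Rightarrow> real"
  assumes "0 < k"
  shows "\<exists>f. (\<Sum>i<k. (f i)\<^sup>2) = 1 \<and>
    (\<forall>g. (\<Sum>i<k. \<Sum>j<k. g i * a i j * g j)
       \<le> (\<Sum>i<k. \<Sum>j<k. f i * a i j * f j) * (\<Sum>i<k. (g i)\<^sup>2))"
proof -
  define F where "F g = (\<Sum>i<k. \<Sum>j<k. g i * a i j * g j)" for g :: "nat \<Rightarrow> real"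
  define N where "N g = (\<Sum>i<k. (g i)\<^sup>2)" for g :: "nat \<Rightarrow> real"
  define S where "S = {f :: nat \<Rightarrow> real. (\<forall>i\<ge>k. f i = 0) \<and> N f = 1}"
  have "(\<lambda>i. if i = 0 then 1 else 0) \<in> S"
    using assms by (simp add: S_def N_def if_distrib[of "\<lambda>x. x\<^sup>2"] cong: if_cong)
  moreover have "compact S" unfolding S_def N_def by (rule compact_unit_sphere_fun)
  moreover have "continuous_on S F"
  proof -
    have "continuous_on S (\<lambda>f. f i)" for i
      by (rule continuous_on_subset[OF continuous_on_product_coordinates]) simp
    then show ?thesis unfolding F_def by (intro continuous_intros)
  qed
  ultimately obtain f where f: "f \<in> S" and f_max: "\<And>h. h \<in> S \<Longrightarrow> F h \<le> F f"
    using continuous_attains_sup[of S F] by blast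
  have "F g \<le> F f * N g" for g
  proof (cases "N g = 0")
    case True
    then have "\<forall>i<k. g i = 0" unfolding N_def by (simp add: sum_nonneg_eq_0_iff)
    then show ?thesis using True by (simp add: F_def)
  next
    case False
    moreover have "0 \<le> N g" unfolding N_def by (simp add: sum_nonneg)
    ultimately have N_pos: "N g > 0" by simp
    define h where "h i = (if i < k then g i / sqrt (N g) else 0)" for i
    have "N h = N g / N g"
      using N_pos unfolding N_def h_def by (simp add: power_divide sum_divide_distrib[symmetric])
    then have "h \<in> S" using N_pos by (simp add: S_def h_def)
    moreover have "F h = F g / N g"
      unfolding F_def h_def using N_pos
      by (simp add: sum_divide_distrib field_simps)
    ultimately have "F g / N g \<le> F f" using f_max by metis
    then show ?thesis using N_pos by (simp add: divide_le_eq)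
  qed
  then show ?thesis using f unfolding S_def F_def N_def by blast
qed

lemma quadratic_form_maximizer_is_eigenvector:
  fixes a :: "nat \<Rightarrow> nat \<Rightarrow> real"
  assumes sym: "\<And>i j. i < k \<Longrightarrow> j < k \<Longrightarrow> a i j = a j i"
    and unit: "(\<Sum>i<k. (f i)\<^sup>2) = 1"
    and max: "\<And>g. (\<Sum>i<k. \<Sum>j<k. g i * a i j * g j)
       \<le> (\<Sum>i<k. \<Sum>j<k. f i * a i j * f j) * (\<Sum>i<k. (g i)\<^sup>2)"
  shows "\<forall>i<k. (\<Sum>j<k. a i j * f j) = (\<Sum>i<k. \<Sum>j<k. f i * a i j * f j) * f i"
proof -
  define B where "B g h = (\<Sum>i<k. \<Sum>j<k. g i * a i j * h j)" for g h :: "nat \<Rightarrow> real"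
  define N where "N g = (\<Sum>i<k. (g i)\<^sup>2)" for g :: "nat \<Rightarrow> real"
  define \<mu> where "\<mu> = B f f"
  have B_expand: "B (\<lambda>i. f i + t * g i) (\<lambda>i. f i + t * g i) = \<mu> + 2 * t * B g f + t\<^sup>2 * B g g"
    for t g
  proof -
    have "B (\<lambda>i. f i + t * g i) (\<lambda>i. f i + t * g i) = B f f + t * B f g + t * B g f + t\<^sup>2 * B g g"
      unfolding B_def by (simp add: algebra_simps sum.distrib sum_distrib_left power2_eq_square)
    moreover have "B f g = B g f" unfolding B_def
      by (subst sum.swap) (auto intro!: sum.cong simp: sym)
    ultimately show ?thesis unfolding \<mu>_def by simp
  qed
  have N_expand: "N (\<lambda>i. f i + t * g i) = 1 + 2 * t * (\<Sum>i<k. g i * f i) + t\<^sup>2 * N g" for t g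
    using unit unfolding N_def
    by (simp add: algebra_simps sum.distrib sum_distrib_left power2_eq_square)
  have stationary: "B g f = \<mu> * (\<Sum>i<k. g i * f i)" for g
  proof -
    \<comment> \<open>\<open>f + t g\<close> never beats the maximiser, so the coefficient of \<open>t\<close> vanishes\<close>
    have "\<forall>t. 2 * t * (B g f - \<mu> * (\<Sum>i<k. g i * f i)) + t\<^sup>2 * (B g g - \<mu> * N g) \<le> 0"
    proof
      fix t
      have "B (\<lambda>i. f i + t * g i) (\<lambda>i. f i + t * g i) \<le> \<mu> * N (\<lambda>i. f i + t * g i)"
        unfolding B_def N_def \<mu>_def by (rule max)
      then show "2 * t * (B g f - \<mu> * (\<Sum>i<k. g i * f i)) + t\<^sup>2 * (B g g - \<mu> * N g) \<le> 0"
        unfolding B_expand N_expand by (simp add: algebra_simps)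
    qed
    then show ?thesis using quadratic_nonpos_imp_linear_coeff_zero by fastforce
  qed
  define e where "e i = (\<Sum>j<k. a i j * f j) - \<mu> * f i" for i
  have "(\<Sum>i<k. e i * e i) = B e f - \<mu> * (\<Sum>i<k. e i * f i)"
    unfolding B_def by (simp add: e_def sum_distrib_left sum_subtractf algebra_simps)
  then have "(\<Sum>i<k. e i * e i) = 0" using stationary by simp
  then have "\<forall>i<k. e i = 0" by (simp add: sum_nonneg_eq_0_iff)
  then show ?thesis unfolding e_def \<mu>_def B_def by simp
qed

lemma finite_eigenvalues:
  fixes A :: "'a :: field mat"
  assumes A: "A \<in> carrier_mat n n"
  shows "finite {x. eigenvalue A x}"
proof -
  have "char_poly A \<noteq> 0" using degree_monic_char_poly[OF A] by auto
  then have "finite {x. poly (char_poly A) x = 0}" by (rule poly_roots_finite)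
  then show ?thesis using eigenvalue_root_char_poly[OF A] by simp
qed

lemma quadratic_form_as_sum:
  assumes "A \<in> carrier_mat k k" "y \<in> carrier_vec k"
  shows "y \<bullet> (A *\<^sub>v y) = (\<Sum>i<k. \<Sum>j<k. y $ i * A $$ (i, j) * y $ j)"
  using assms
  by (auto simp: scalar_prod_def mult_mat_vec_def row_def sum_distrib_left atLeast0LessThan
      mult.assoc intro!: sum.cong)

lemma quadratic_form_le_lambda_max:
  fixes A :: "real mat"
  assumes A: "A \<in> carrier_mat k k" and sym: "transpose_mat A = A" and y: "y \<in> carrier_vec k"
  shows "y \<bullet> (A *\<^sub>v y) \<le> lambda_max A * (y \<bullet> y)"
proof (cases "k = 0")
  case True
  then show ?thesis using y by (simp add: scalar_prod_def)
next
  case False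
  have sym_entries: "A $$ (i, j) = A $$ (j, i)" if "i < k" "j < k" for i j
  proof -
    have "A $$ (i, j) = transpose_mat A $$ (i, j)" using sym by simp
    also have "\<dots> = A $$ (j, i)" using A that by simp
    finally show ?thesis .
  qed
  obtain f where unit: "(\<Sum>i<k. (f i)\<^sup>2) = 1"
    and max: "\<And>g. (\<Sum>i<k. \<Sum>j<k. g i * A $$ (i, j) * g j)
       \<le> (\<Sum>i<k. \<Sum>j<k. f i * A $$ (i, j) * f j) * (\<Sum>i<k. (g i)\<^sup>2)"
    using quadratic_form_attains_max_on_sphere[of k "\<lambda>i j. A $$ (i, j)"] False by auto
  define \<mu> where "\<mu> = (\<Sum>i<k. \<Sum>j<k. f i * A $$ (i, j) * f j)"
  have eigen: "\<forall>i<k. (\<Sum>j<k. A $$ (i, j) * f j) = \<mu> * f i"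
    unfolding \<mu>_def by (rule quadratic_form_maximizer_is_eigenvector[OF sym_entries unit max])
  define x where "x = vec k f"
  have x: "x \<in> carrier_vec k" unfolding x_def by simp
  have "x \<noteq> 0\<^sub>v k"
  proof
    assume "x = 0\<^sub>v k"
    then have "\<forall>i<k. f i = 0" unfolding x_def by (metis index_vec index_zero_vec(1))
    then show False using unit by simp
  qed
  moreover have "A *\<^sub>v x = \<mu> \<cdot>\<^sub>v x"
    using A eigen by (intro eq_vecI) (auto simp: x_def mult_mat_vec_def scalar_prod_def row_def
        atLeast0LessThan)
  ultimately have "eigenvalue A \<mu>"
    unfolding eigenvalue_def eigenvector_def using A x by auto
  then have \<mu>_le: "\<mu> \<le> lambda_max A"
    unfolding lambda_max_def using finite_eigenvalues[OF A] by (intro Max_ge) auto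
  have "y \<bullet> (A *\<^sub>v y) \<le> \<mu> * (\<Sum>i<k. (y $ i)\<^sup>2)"
    unfolding quadratic_form_as_sum[OF A y] \<mu>_def by (rule max)
  also have "(\<Sum>i<k. (y $ i)\<^sup>2) = y \<bullet> y"
    using y by (simp add: scalar_prod_def atLeast0LessThan power2_eq_square)
  also have "\<mu> * (y \<bullet> y) \<le> lambda_max A * (y \<bullet> y)"
    using \<mu>_le by (rule mult_right_mono) (simp add: scalar_prod_def sum_nonneg)
  finally show ?thesis .
qed

section \<open>Norm bounds for Kronecker products\<close>

lemma gram_quadratic_form:
  assumes U: "U \<in> carrier_mat r m" and y: "y \<in> carrier_vec m"
  shows "y \<bullet> ((transpose_mat U * U) *\<^sub>v y) = (U *\<^sub>v y) \<bullet> (U *\<^sub>v (y :: 'a :: comm_semiring_0 vec))"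
proof -
  have Ut: "transpose_mat U \<in> carrier_mat m r" using U by simp
  have "y \<bullet> ((transpose_mat U * U) *\<^sub>v y) = y \<bullet> (transpose_mat U *\<^sub>v (U *\<^sub>v y))"
    using U y by simp
  also have "\<dots> = (U *\<^sub>v y) \<bullet> (U *\<^sub>v y)"
    using transpose_vec_mult_scalar[OF Ut mult_mat_vec_carrier[OF U y] y] by simp
  finally show ?thesis .
qed

lemma sum_lessThan_mult_split:
  fixes a d :: nat
  shows "(\<Sum>t<a * d. f t) = (\<Sum>j<a. \<Sum>k<d. f (j * d + k))"
proof -
  have "(\<Sum>t<a * d. f t) = (\<Sum>j<a. sum f {j * d..<j * d + d})"
    by (rule sum.nat_group[symmetric])
  also have "\<dots> = (\<Sum>j<a. \<Sum>k<d. f (j * d + k))"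
    by (simp add: sum.atLeastLessThan_shift_0[of f] atLeast0LessThan comp_def)
  finally show ?thesis .
qed

lemma index_kron_one_mult_vec:
  fixes U :: "'a :: comm_semiring_1 mat"
  assumes U: "U \<in> carrier_mat r m" and v: "v \<in> carrier_vec (m * d)" and j: "j < r" and k: "k < d"
  shows "(kron U (1\<^sub>m d) *\<^sub>v v) $ (j * d + k) = (U *\<^sub>v vec m (\<lambda>i. v $ (i * d + k))) $ j"
proof -
  have lt: "i * d + k' < n * d" if "i < n" "k' < d" for i k' n :: nat
  proof -
    have "i * d + k' < (i + 1) * d" using that by simp
    also have "\<dots> \<le> n * d" using that by (intro mult_right_mono) auto
    finally show ?thesis .
  qed
  have entry: "kron U (1\<^sub>m d) $$ (j * d + k, i * d + k') = (if k' = k then U $$ (j, i) else 0)"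
    if "i < m" "k' < d" for i k'
    using U j k that lt[OF j k] lt[OF that] by (auto simp: kron_def)
  have "(kron U (1\<^sub>m d) *\<^sub>v v) $ (j * d + k) = (\<Sum>t<m * d. kron U (1\<^sub>m d) $$ (j * d + k, t) * v $ t)"
    using U v lt[OF j k] by (simp add: kron_def mult_mat_vec_def scalar_prod_def atLeast0LessThan)
  also have "\<dots> = (\<Sum>i<m. \<Sum>k'<d. kron U (1\<^sub>m d) $$ (j * d + k, i * d + k') * v $ (i * d + k'))"
    by (rule sum_lessThan_mult_split)
  also have "\<dots> = (\<Sum>i<m. U $$ (j, i) * v $ (i * d + k))"
    using k by (simp add: entry if_distrib[of "\<lambda>x. x * _"] cong: if_cong)
  also have "\<dots> = (U *\<^sub>v vec m (\<lambda>i. v $ (i * d + k))) $ j"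
    using U j by (simp add: mult_mat_vec_def scalar_prod_def row_def atLeast0LessThan)
  finally show ?thesis .
qed

lemma kron_one_mult_vec_norm_le:
  fixes U :: "real mat"
  assumes U: "U \<in> carrier_mat r m"
    and bound: "\<And>y. y \<in> carrier_vec m \<Longrightarrow> (U *\<^sub>v y) \<bullet> (U *\<^sub>v y) \<le> c * (y \<bullet> y)"
    and v: "v \<in> carrier_vec (m * d)"
  shows "(kron U (1\<^sub>m d) *\<^sub>v v) \<bullet> (kron U (1\<^sub>m d) *\<^sub>v v) \<le> c * (v \<bullet> v)"
proof -
  define z where "z = kron U (1\<^sub>m d) *\<^sub>v v"
  define y where "y k = vec m (\<lambda>i. v $ (i * d + k))" for k
  have y: "y k \<in> carrier_vec m" for k unfolding y_def by simp
  have "dim_vec z = r * d" using U unfolding z_def kron_def by simp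
  then have "z \<bullet> z = (\<Sum>j<r. \<Sum>k<d. z $ (j * d + k) * z $ (j * d + k))"
    by (simp add: scalar_prod_def atLeast0LessThan sum_lessThan_mult_split)
  also have "\<dots> = (\<Sum>k<d. \<Sum>j<r. (U *\<^sub>v y k) $ j * (U *\<^sub>v y k) $ j)"
    unfolding z_def y_def by (subst sum.swap) (simp add: index_kron_one_mult_vec[OF U v])
  also have "\<dots> = (\<Sum>k<d. (U *\<^sub>v y k) \<bullet> (U *\<^sub>v y k))"
    using U by (simp add: scalar_prod_def atLeast0LessThan)
  also have "\<dots> \<le> (\<Sum>k<d. c * (y k \<bullet> y k))"
    by (intro sum_mono bound y)
  also have "\<dots> = c * (\<Sum>i<m. \<Sum>k<d. v $ (i * d + k) * v $ (i * d + k))"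
    by (subst sum.swap) (simp add: sum_distrib_left y_def scalar_prod_def atLeast0LessThan)
  also have "(\<Sum>i<m. \<Sum>k<d. v $ (i * d + k) * v $ (i * d + k)) = v \<bullet> v"
    using v by (simp add: scalar_prod_def atLeast0LessThan sum_lessThan_mult_split)
  finally show ?thesis unfolding z_def .
qed

lemma transpose_mult_vec_norm_le:
  fixes A :: "real mat"
  assumes A: "A \<in> carrier_mat r m" and c: "0 < c"
    and bound: "\<And>y. y \<in> carrier_vec m \<Longrightarrow> (A *\<^sub>v y) \<bullet> (A *\<^sub>v y) \<le> c * (y \<bullet> y)"
    and w: "w \<in> carrier_vec r"
  shows "(transpose_mat A *\<^sub>v w) \<bullet> (transpose_mat A *\<^sub>v w) \<le> c * (w \<bullet> w)"
proof -
  define z where "z = transpose_mat A *\<^sub>v w"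
  define u where "u = A *\<^sub>v z"
  have z: "z \<in> carrier_vec m" unfolding z_def using A w by auto
  have u: "u \<in> carrier_vec r" unfolding u_def using A z by auto
  have zz: "z \<bullet> z = w \<bullet> u"
    using transpose_vec_mult_scalar[OF A z w] unfolding z_def u_def by simp
  have uu: "u \<bullet> u \<le> c * (w \<bullet> u)" using bound[OF z] zz unfolding u_def by simp
  have "0 \<le> (\<Sum>i<r. (c * w $ i - u $ i)\<^sup>2)" by (simp add: sum_nonneg)
  also have "\<dots> = c\<^sup>2 * (w \<bullet> w) - 2 * c * (w \<bullet> u) + u \<bullet> u"
    using w u by (simp add: scalar_prod_def atLeast0LessThan power2_eq_square algebra_simps
        sum.distrib sum_subtractf sum_distrib_left)
  also have "\<dots> \<le> c * (c * (w \<bullet> w) - w \<bullet> u)"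
    using uu by (simp add: algebra_simps power2_eq_square)
  finally show ?thesis using c zz unfolding z_def by (simp add: zero_le_mult_iff)
qed

lemma kron_transpose_norm_le_lambda_max:
  fixes U :: "real mat"
  assumes U: "U \<in> carrier_mat r m" and pos: "0 < lambda_max (transpose_mat U * U)"
    and v: "v \<in> carrier_vec (r * d)"
  shows "(transpose_mat (kron U (1\<^sub>m d)) *\<^sub>v v) \<bullet> (transpose_mat (kron U (1\<^sub>m d)) *\<^sub>v v)
    \<le> lambda_max (transpose_mat U * U) * (v \<bullet> v)"
proof (rule transpose_mult_vec_norm_le[OF _ pos _ v])
  have L: "transpose_mat U * U \<in> carrier_mat m m" using U by simp
  have "transpose_mat (transpose_mat U * U) = transpose_mat U * U"
    using U by (simp add: transpose_mult[of _ m r])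
  then have "(U *\<^sub>v y) \<bullet> (U *\<^sub>v y) \<le> lambda_max (transpose_mat U * U) * (y \<bullet> y)"
    if "y \<in> carrier_vec m" for y
    using quadratic_form_le_lambda_max[OF L _ that] gram_quadratic_form[OF U that] by simp
  then show "(kron U (1\<^sub>m d) *\<^sub>v y) \<bullet> (kron U (1\<^sub>m d) *\<^sub>v y)
      \<le> lambda_max (transpose_mat U * U) * (y \<bullet> y)" if "y \<in> carrier_vec (m * d)" for y
    by (rule kron_one_mult_vec_norm_le[OF U _ that])
  show "kron U (1\<^sub>m d) \<in> carrier_mat (r * d) (m * d)" using U by (simp add: kron_def)
qed

lemma pd_smult_one_minus_congruence:
  fixes W :: "real mat"
  assumes W: "W \<in> carrier_mat c b" and \<beta>: "0 < \<beta>" and lam: "0 < lam"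
    and bound: "\<And>v. v \<in> carrier_vec c \<Longrightarrow> (transpose_mat W *\<^sub>v v) \<bullet> (transpose_mat W *\<^sub>v v) \<le> lam * (v \<bullet> v)"
    and g: "\<And>j. j < b \<Longrightarrow> g j * \<beta> < 1 / lam"
  shows "pd ((1 / \<beta>) \<cdot>\<^sub>m 1\<^sub>m c - W * mat_diag b g * transpose_mat W)"
proof -
  \<comment> \<open>inserting \<open>0\<close> keeps the maximum meaningful for \<open>b = 0\<close>\<close>
  define K where "K = Max (insert 0 (g ` {..<b}))"
  have g_le: "g j \<le> K" if "j < b" for j unfolding K_def using that by (intro Max_ge) auto
  have K_nonneg: "0 \<le> K" unfolding K_def by (intro Max_ge) auto
  have "K \<in> insert 0 (g ` {..<b})" unfolding K_def by (intro Max_in) auto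
  then have K: "0 \<le> K" "K * lam < 1 / \<beta>"
    using K_nonneg g \<beta> lam by (auto simp: field_simps)
  define X where "X = W * mat_diag b g * transpose_mat W"
  have X: "X \<in> carrier_mat c c" unfolding X_def using W by (intro mult_carrier_mat[of _ c b]) auto
  have "0 < v \<bullet> (((1 / \<beta>) \<cdot>\<^sub>m 1\<^sub>m c - X) *\<^sub>v v)" if v: "v \<in> carrier_vec c" "v \<noteq> 0\<^sub>v c" for v
  proof -
    define z where "z = transpose_mat W *\<^sub>v v"
    have z: "z \<in> carrier_vec b" unfolding z_def using W v by simp
    have "v \<bullet> (X *\<^sub>v v) = (\<Sum>i<b. g i * (z $ i)\<^sup>2)"
      unfolding X_def z_def quadratic_form_congruence[OF W mat_diag_dim v(1)]
      by (rule quadratic_form_mat_diag) (use W v in simp)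
    also have "\<dots> \<le> (\<Sum>i<b. K * (z $ i)\<^sup>2)"
      by (intro sum_mono mult_right_mono g_le) auto
    also have "\<dots> = K * (z \<bullet> z)"
      using z by (simp add: sum_distrib_left scalar_prod_def atLeast0LessThan power2_eq_square)
    also have "\<dots> \<le> K * (lam * (v \<bullet> v))"
      unfolding z_def using bound[OF v(1)] K(1) by (rule mult_left_mono)
    also have "\<dots> < (1 / \<beta>) * (v \<bullet> v)"
      using mult_strict_right_mono[OF K(2) scalar_prod_self_pos[OF v]] by (simp add: mult.assoc)
    finally have "v \<bullet> (X *\<^sub>v v) < (1 / \<beta>) * (v \<bullet> v)" .
    moreover have "v \<bullet> (((1 / \<beta>) \<cdot>\<^sub>m 1\<^sub>m c - X) *\<^sub>v v) = (1 / \<beta>) * (v \<bullet> v) - v \<bullet> (X *\<^sub>v v)"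
    proof -
      have S: "(1 / \<beta>) \<cdot>\<^sub>m 1\<^sub>m c \<in> carrier_mat c c" by simp
      have "v \<bullet> (((1 / \<beta>) \<cdot>\<^sub>m 1\<^sub>m c - X) *\<^sub>v v)
          = v \<bullet> (((1 / \<beta>) \<cdot>\<^sub>m 1\<^sub>m c) *\<^sub>v v) - v \<bullet> (X *\<^sub>v v)"
        unfolding minus_mult_distrib_mat_vec[OF S X v(1)]
        by (rule scalar_prod_minus_distrib[OF v(1) mult_mat_vec_carrier[OF S v(1)]
              mult_mat_vec_carrier[OF X v(1)]])
      then show ?thesis by (simp add: quadratic_form_smult_one[OF v(1)])
    qed
    ultimately show ?thesis by simp
  qed
  moreover have "transpose_mat ((1 / \<beta>) \<cdot>\<^sub>m 1\<^sub>m c - X) = (1 / \<beta>) \<cdot>\<^sub>m 1\<^sub>m c - X"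
    using W X by (simp add: X_def transpose_minus[of _ c c] transpose_congruence smult_one_mat_eq_mat_diag)
  ultimately show ?thesis unfolding X_def[symmetric] pd_def using X by auto
qed

corollary pd_smult_one_minus_kron_congruence:
  fixes U :: "real mat"
  assumes U: "U \<in> carrier_mat r m" and \<beta>: "0 < \<beta>" and lam: "0 < lambda_max (transpose_mat U * U)"
    and g: "\<And>j. j < m * d \<Longrightarrow> g j * \<beta> < 1 / lambda_max (transpose_mat U * U)"
  shows "pd ((1 / \<beta>) \<cdot>\<^sub>m 1\<^sub>m (r * d)
    - kron U (1\<^sub>m d) * mat_diag (m * d) g * transpose_mat (kron U (1\<^sub>m d)))"
proof (rule pd_smult_one_minus_congruence[OF _ \<beta> lam _ g])
  show "kron U (1\<^sub>m d) \<in> carrier_mat (r * d) (m * d)" using U by (simp add: kron_def)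
qed (rule kron_transpose_norm_le_lambda_max[OF U lam])

section \<open>The block structure of Q and M\<close>

lemma mat_inv_if_det_nonzero:
  fixes A :: "'a :: field mat"
  assumes A: "A \<in> carrier_mat n n" and det: "det A \<noteq> 0"
  shows "invertible_mat A" "A * mat_inv A = 1\<^sub>m n" "mat_inv A * A = 1\<^sub>m n"
    "mat_inv A \<in> carrier_mat n n"
proof -
  have "mat_inverse A \<noteq> None"
    using mat_inverse(1)[OF A, of "()"] det_non_zero_imp_unit[OF A det, of "()"] by blast
  then obtain B where "mat_inverse A = Some B" by blast
  then have B: "A * B = 1\<^sub>m n" "B * A = 1\<^sub>m n" "B \<in> carrier_mat n n" and inv: "mat_inv A = B"
    using mat_inverse(2)[OF A] by (auto simp: mat_inv_def)
  then show "A * mat_inv A = 1\<^sub>m n" "mat_inv A * A = 1\<^sub>m n" "mat_inv A \<in> carrier_mat n n" by auto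
  show "invertible_mat A"
    unfolding invertible_mat_def inverts_mat_def using A B by auto
qed

lemma four_block_diag_mult_shear:
  fixes Gi G S W :: "'a :: comm_ring_1 mat"
  assumes G: "G \<in> carrier_mat b b" and Gi: "Gi \<in> carrier_mat b b" and inv: "Gi * G = 1\<^sub>m b"
    and W: "W \<in> carrier_mat c b" and S: "S \<in> carrier_mat c c"
  shows "four_block_mat Gi (0\<^sub>m b c) (0\<^sub>m c b) S
       * four_block_mat (1\<^sub>m b) (- (G * transpose_mat W)) (0\<^sub>m c b) (1\<^sub>m c)
     = four_block_mat Gi (- transpose_mat W) (0\<^sub>m c b) S"
proof -
  have GW: "G * transpose_mat W \<in> carrier_mat b c" using G W by simp
  have "Gi * - (G * transpose_mat W) = - (Gi * G * transpose_mat W)"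
    using G Gi W by simp
  also have "\<dots> = - transpose_mat W" using W inv by simp
  finally have "Gi * - (G * transpose_mat W) = - transpose_mat W" .
  then show ?thesis
    using G Gi W S GW by (subst mult_four_block_mat[of _ b b _ c _ c]) auto
qed

lemma four_block_shear_gap:
  fixes Gi G S W :: "'a :: comm_ring_1 mat"
  assumes G: "G \<in> carrier_mat b b" and Gi: "Gi \<in> carrier_mat b b" and inv: "G * Gi = 1\<^sub>m b"
    and sym: "transpose_mat G = G" "transpose_mat Gi = Gi" "transpose_mat S = S"
    and W: "W \<in> carrier_mat c b" and S: "S \<in> carrier_mat c c"
  defines "Q \<equiv> four_block_mat Gi (- transpose_mat W) (0\<^sub>m c b) S"
    and "M \<equiv> four_block_mat (1\<^sub>m b) (- (G * transpose_mat W)) (0\<^sub>m c b) (1\<^sub>m c)"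
  shows "transpose_mat Q + Q - transpose_mat M * Q
    = four_block_mat Gi (0\<^sub>m b c) (0\<^sub>m c b) (S - W * G * transpose_mat W)"
proof -
  have WG: "transpose_mat (G * transpose_mat W) = W * G"
    using G W sym by (simp add: transpose_mult[of G b b])
  have Qt: "transpose_mat Q = four_block_mat Gi (0\<^sub>m b c) (- W) S"
    unfolding Q_def using Gi W S sym
    by (subst transpose_four_block_mat) (auto simp: transpose_uminus)
  have Mt: "transpose_mat M = four_block_mat (1\<^sub>m b) (0\<^sub>m b c) (- (W * G)) (1\<^sub>m c)"
    unfolding M_def using G W WG by (subst transpose_four_block_mat) (auto simp: transpose_uminus)
  have "- (W * G) * Gi = - W" using W G Gi inv by simp
  moreover have "- (W * G) * - transpose_mat W = W * G * transpose_mat W"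
    using W G by simp
  ultimately have MtQ: "transpose_mat M * Q
      = four_block_mat Gi (- transpose_mat W) (- W) (W * G * transpose_mat W + S)"
    unfolding Mt Q_def using G Gi W S by (subst mult_four_block_mat[of _ b b _ c _ c]) auto
  show ?thesis
    unfolding Qt MtQ unfolding Q_def using G Gi W S
    by (intro eq_matI) auto
qed

lemma QM_block_inverse:
  fixes a b c :: nat and th al ga :: "nat \<Rightarrow> real" and W S :: "real mat"
  assumes W: "W \<in> carrier_mat c b" and S: "S \<in> carrier_mat c c"
    and th: "\<And>j. j < a \<Longrightarrow> th j \<noteq> 0" and ga: "\<And>j. j < b \<Longrightarrow> ga j \<noteq> 0"
  defines "Q \<equiv> four_block_mat (mat_diag a (\<lambda>j. 1 / al j)) (0\<^sub>m a (b + c)) (0\<^sub>m (b + c) a)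
      (four_block_mat (mat_diag b (\<lambda>j. 1 / ga j)) (- transpose_mat W) (0\<^sub>m c b) S)"
    and "M \<equiv> four_block_mat (mat_diag a th) (0\<^sub>m a (b + c)) (0\<^sub>m (b + c) a)
      (four_block_mat (1\<^sub>m b) (- (mat_diag b ga * transpose_mat W)) (0\<^sub>m c b) (1\<^sub>m c))"
    and "H \<equiv> four_block_mat (mat_diag a (\<lambda>j. 1 / (al j * th j))) (0\<^sub>m a (b + c)) (0\<^sub>m (b + c) a)
      (four_block_mat (mat_diag b (\<lambda>j. 1 / ga j)) (0\<^sub>m b c) (0\<^sub>m c b) S)"
  shows "invertible_mat M \<and> H * M = Q \<and> Q * mat_inv M = H"
proof (intro conjI)
  have M: "M \<in> carrier_mat (a + (b + c)) (a + (b + c))" unfolding M_def by simp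
  have "upper_triangular M"
    unfolding M_def
    by (intro upper_triangular_four_block upper_triangular_mat_diag) (use W in auto)
  moreover have "diag_mat M = map th [0..<a] @ replicate (b + c) 1"
    unfolding M_def diag_four_block_mat[OF mat_diag_dim four_block_carrier_mat[OF one_carrier_mat
        one_carrier_mat]] diag_four_block_mat[OF one_carrier_mat one_carrier_mat]
    by (simp add: diag_mat_mat_diag replicate_add)
  ultimately have "det M = prod_list (map th [0..<a])"
    using det_upper_triangular[OF _ M] by simp
  then have det: "det M \<noteq> 0" using th by (auto simp: prod_list_zero_iff)
  note Minv = mat_inv_if_det_nonzero[OF M det]
  show "invertible_mat M" by (rule Minv(1))
  have "mat_diag a (\<lambda>j. 1 / (al j * th j)) * mat_diag a th = mat_diag a (\<lambda>j. 1 / al j)"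
    unfolding mat_diag_diag using th by (intro mat_diag_cong) simp
  moreover have "mat_diag b (\<lambda>j. 1 / ga j) * mat_diag b ga = 1\<^sub>m b"
    unfolding mat_diag_diag mat_diag_one[symmetric] using ga by (intro mat_diag_cong) simp
  ultimately show HM: "H * M = Q"
    unfolding H_def M_def Q_def
    using W S by (subst mult_four_block_diag[of _ a a _ "b + c" "b + c" _ a _ "b + c"])
      (auto simp: four_block_diag_mult_shear)
  have H: "H \<in> carrier_mat (a + (b + c)) (a + (b + c))" unfolding H_def using S by simp
  have "Q * mat_inv M = H * M * mat_inv M" using HM by simp
  also have "\<dots> = H * (M * mat_inv M)" by (rule assoc_mult_mat[OF H M Minv(4)])
  finally show "Q * mat_inv M = H" using Minv(2) H by simp
qed

lemma QM_block_gap: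
  fixes a b c :: nat and th al ga :: "nat \<Rightarrow> real" and W S :: "real mat"
  assumes W: "W \<in> carrier_mat c b" and S: "S \<in> carrier_mat c c" and S_sym: "transpose_mat S = S"
    and ga: "\<And>j. j < b \<Longrightarrow> ga j \<noteq> 0"
  defines "Q \<equiv> four_block_mat (mat_diag a (\<lambda>j. 1 / al j)) (0\<^sub>m a (b + c)) (0\<^sub>m (b + c) a)
      (four_block_mat (mat_diag b (\<lambda>j. 1 / ga j)) (- transpose_mat W) (0\<^sub>m c b) S)"
    and "M \<equiv> four_block_mat (mat_diag a th) (0\<^sub>m a (b + c)) (0\<^sub>m (b + c) a)
      (four_block_mat (1\<^sub>m b) (- (mat_diag b ga * transpose_mat W)) (0\<^sub>m c b) (1\<^sub>m c))"
  shows "transpose_mat Q + Q - transpose_mat M * Q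
    = four_block_mat (mat_diag a (\<lambda>j. (2 - th j) / al j)) (0\<^sub>m a (b + c)) (0\<^sub>m (b + c) a)
        (four_block_mat (mat_diag b (\<lambda>j. 1 / ga j)) (0\<^sub>m b c) (0\<^sub>m c b)
          (S - W * mat_diag b ga * transpose_mat W))"
proof -
  define Q2 where "Q2 = four_block_mat (mat_diag b (\<lambda>j. 1 / ga j)) (- transpose_mat W) (0\<^sub>m c b) S"
  define M2 where "M2 = four_block_mat (1\<^sub>m b) (- (mat_diag b ga * transpose_mat W)) (0\<^sub>m c b) (1\<^sub>m c)"
  have Q2: "Q2 \<in> carrier_mat (b + c) (b + c)" and M2: "M2 \<in> carrier_mat (b + c) (b + c)"
    unfolding Q2_def M2_def using S by auto
  have "mat_diag b ga * mat_diag b (\<lambda>j. 1 / ga j) = 1\<^sub>m b"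
    unfolding mat_diag_diag mat_diag_one[symmetric] using ga by (intro mat_diag_cong) simp
  then have gap2: "transpose_mat Q2 + Q2 - transpose_mat M2 * Q2
    = four_block_mat (mat_diag b (\<lambda>j. 1 / ga j)) (0\<^sub>m b c) (0\<^sub>m c b) (S - W * mat_diag b ga * transpose_mat W)"
    unfolding Q2_def M2_def using W S S_sym by (intro four_block_shear_gap) auto
  have gap1: "mat_diag a (\<lambda>j. 1 / al j) + mat_diag a (\<lambda>j. 1 / al j) - mat_diag a th * mat_diag a (\<lambda>j. 1 / al j)
    = mat_diag a (\<lambda>j. (2 - th j) / al j)"
    unfolding mat_diag_diag mat_diag_add mat_diag_minus by (intro mat_diag_cong) (simp add: diff_divide_distrib)
  have carriers: "transpose_mat Q2 + Q2 \<in> carrier_mat (b + c) (b + c)"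
    "transpose_mat M2 * Q2 \<in> carrier_mat (b + c) (b + c)"
    "mat_diag a th * mat_diag a (\<lambda>j. 1 / al j) \<in> carrier_mat a a"
    using Q2 M2 by (auto intro!: mult_carrier_mat[of _ _ "b + c"] mult_carrier_mat[of _ a a])
  show ?thesis
    unfolding Q_def M_def Q2_def[symmetric] M2_def[symmetric]
    using Q2 M2 carriers
    by (simp add: transpose_four_block_diag[of _ a a _ "b + c" "b + c"]
        mult_four_block_diag[of _ a a _ "b + c" "b + c" _ a _ "b + c"]
        add_four_block_diag[of _ a a _ "b + c" "b + c"] minus_four_block_diag[of _ a a _ "b + c" "b + c"]
        gap1 gap2 del: mat_diag_diag)
qed

lemma QM_block_loewner:
  fixes a b c :: nat and th al ga :: "nat \<Rightarrow> real" and W S :: "real mat"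
  assumes W: "W \<in> carrier_mat c b" and S: "S \<in> carrier_mat c c" and S_sym: "transpose_mat S = S"
    and th: "\<And>j. j < a \<Longrightarrow> 0 < th j \<and> th j < 2" and al: "\<And>j. j < a \<Longrightarrow> 0 < al j"
    and ga: "\<And>j. j < b \<Longrightarrow> 0 < ga j"
    and pd_S: "pd (S - W * mat_diag b ga * transpose_mat W)"
  shows "let Q = block3 (mat_diag a (\<lambda>j. 1 / al j)) (0\<^sub>m a b) (0\<^sub>m a c)
                   (0\<^sub>m b a) (mat_diag b (\<lambda>j. 1 / ga j)) (- transpose_mat W)
                   (0\<^sub>m c a) (0\<^sub>m c b) S;
             M = block3 (mat_diag a th) (0\<^sub>m a b) (0\<^sub>m a c)
                   (0\<^sub>m b a) (1\<^sub>m b) (- (mat_diag b ga * transpose_mat W))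
                   (0\<^sub>m c a) (0\<^sub>m c b) (1\<^sub>m c);
             H = Q * mat_inv M;
             D = transpose_mat Q + Q - transpose_mat M * H * M
         in invertible_mat M \<and> loewner_ge H D \<and> pd D"
proof -
  define Q where "Q = four_block_mat (mat_diag a (\<lambda>j. 1 / al j)) (0\<^sub>m a (b + c)) (0\<^sub>m (b + c) a)
      (four_block_mat (mat_diag b (\<lambda>j. 1 / ga j)) (- transpose_mat W) (0\<^sub>m c b) S)"
  define M where "M = four_block_mat (mat_diag a th) (0\<^sub>m a (b + c)) (0\<^sub>m (b + c) a)
      (four_block_mat (1\<^sub>m b) (- (mat_diag b ga * transpose_mat W)) (0\<^sub>m c b) (1\<^sub>m c))"
  define H where "H = four_block_mat (mat_diag a (\<lambda>j. 1 / (al j * th j))) (0\<^sub>m a (b + c)) (0\<^sub>m (b + c) a)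
      (four_block_mat (mat_diag b (\<lambda>j. 1 / ga j)) (0\<^sub>m b c) (0\<^sub>m c b) S)"
  define X where "X = W * mat_diag b ga * transpose_mat W"
  define D where "D = four_block_mat (mat_diag a (\<lambda>j. (2 - th j) / al j)) (0\<^sub>m a (b + c)) (0\<^sub>m (b + c) a)
      (four_block_mat (mat_diag b (\<lambda>j. 1 / ga j)) (0\<^sub>m b c) (0\<^sub>m c b) (S - X))"
  have X: "X \<in> carrier_mat c c" unfolding X_def using W by (intro mult_carrier_mat[of _ c b]) auto
  have SX: "S - X \<in> carrier_mat c c" by (rule minus_carrier_mat[OF X])
  have "invertible_mat M \<and> H * M = Q \<and> Q * mat_inv M = H"
    unfolding Q_def M_def H_def by (rule QM_block_inverse[OF W S]) (use th ga in force)+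
  then have M_inv: "invertible_mat M" and HM: "H * M = Q" and QMinv: "Q * mat_inv M = H" by auto
  have block3_eqs:
    "block3 (mat_diag a (\<lambda>j. 1 / al j)) (0\<^sub>m a b) (0\<^sub>m a c) (0\<^sub>m b a) (mat_diag b (\<lambda>j. 1 / ga j))
       (- transpose_mat W) (0\<^sub>m c a) (0\<^sub>m c b) S = Q"
    "block3 (mat_diag a th) (0\<^sub>m a b) (0\<^sub>m a c) (0\<^sub>m b a) (1\<^sub>m b) (- (mat_diag b ga * transpose_mat W))
       (0\<^sub>m c a) (0\<^sub>m c b) (1\<^sub>m c) = M"
    unfolding Q_def M_def using W S by (auto intro!: block3_zero_corner)
  have M: "M \<in> carrier_mat (a + (b + c)) (a + (b + c))" unfolding M_def by simp
  have H: "H \<in> carrier_mat (a + (b + c)) (a + (b + c))" unfolding H_def using S by simp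
  have "transpose_mat M * H * M = transpose_mat M * Q"
    using M H HM by (simp add: assoc_mult_mat[of _ "a + (b + c)" "a + (b + c)"])
  then have "transpose_mat Q + Q - transpose_mat M * H * M = transpose_mat Q + Q - transpose_mat M * Q"
    by simp
  also have "\<dots> = D"
    unfolding D_def X_def Q_def M_def by (rule QM_block_gap[OF W S S_sym]) (use ga in force)
  finally have D_eq: "transpose_mat Q + Q - transpose_mat M * H * M = D" .
  have "H - D = four_block_mat (mat_diag a (\<lambda>j. (1 - th j)\<^sup>2 / (al j * th j))) (0\<^sub>m a (b + c))
      (0\<^sub>m (b + c) a) (four_block_mat (0\<^sub>m b b) (0\<^sub>m b c) (0\<^sub>m c b) X)"
  proof -
    have gap1: "mat_diag a (\<lambda>j. 1 / (al j * th j)) - mat_diag a (\<lambda>j. (2 - th j) / al j)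
        = mat_diag a (\<lambda>j. (1 - th j)\<^sup>2 / (al j * th j))"
      unfolding mat_diag_minus using th al
      by (intro mat_diag_cong) (force simp: field_simps power2_eq_square)
    have gap2: "four_block_mat (mat_diag b (\<lambda>j. 1 / ga j)) (0\<^sub>m b c) (0\<^sub>m c b) S
        - four_block_mat (mat_diag b (\<lambda>j. 1 / ga j)) (0\<^sub>m b c) (0\<^sub>m c b) (S - X)
        = four_block_mat (0\<^sub>m b b) (0\<^sub>m b c) (0\<^sub>m c b) X"
      using S X by (intro eq_matI) auto
    show ?thesis
      unfolding H_def D_def
      by (subst minus_four_block_diag[of _ a a _ "b + c" "b + c"]) (use S X gap1 gap2 in auto)
  qed
  moreover have "psd (four_block_mat (mat_diag a (\<lambda>j. (1 - th j)\<^sup>2 / (al j * th j))) (0\<^sub>m a (b + c))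
      (0\<^sub>m (b + c) a) (four_block_mat (0\<^sub>m b b) (0\<^sub>m b c) (0\<^sub>m c b) X))"
  proof -
    have "0 \<le> (1 - th j)\<^sup>2 / (al j * th j)" if "j < a" for j
      using th[OF that] al[OF that] by simp
    moreover have "psd X"
      unfolding X_def by (rule psd_congruence[OF W mat_diag_dim psd_mat_diag]) (use ga in force)
    moreover have "0\<^sub>m b b = mat_diag b (\<lambda>_. 0 :: real)" by (rule eq_matI) auto
    ultimately show ?thesis using X by (simp add: psd_four_block_diag psd_mat_diag)
  qed
  moreover have "pd D"
    unfolding D_def using th al ga pd_S SX unfolding X_def
    by (intro pd_four_block_diag pd_mat_diag four_block_carrier_mat) auto
  moreover have "D \<in> carrier_mat (a + (b + c)) (a + (b + c))" unfolding D_def using SX by simp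
  ultimately show ?thesis
    unfolding Let_def block3_eqs QMinv D_eq using M_inv M H by (simp add: loewner_ge_def)
qed

section \<open>Block-constant diagonal matrices\<close>

fun block_entry :: "('b \<Rightarrow> 'a :: zero) \<Rightarrow> ('b \<Rightarrow> nat) \<Rightarrow> 'b list \<Rightarrow> nat \<Rightarrow> 'a" where
  "block_entry c k [] j = 0"
| "block_entry c k (x # xs) j = (if j < k x then c x else block_entry c k xs (j - k x))"

lemma diag_block_mat_smult_one:
  "diag_block_mat (map (\<lambda>x. c x \<cdot>\<^sub>m 1\<^sub>m (k x)) xs)
    = mat_diag (sum_list (map k xs)) (block_entry c k xs :: nat \<Rightarrow> 'a :: semiring_1)"
proof (induction xs)
  case Nil
  show ?case by (rule eq_matI) auto
next
  case (Cons x xs)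
  show ?case unfolding list.map diag_block_mat.simps Let_def Cons.IH by (rule eq_matI) auto
qed

lemma block_entry_pred:
  "(\<And>x. x \<in> set xs \<Longrightarrow> P (c x)) \<Longrightarrow> j < sum_list (map k xs) \<Longrightarrow> P (block_entry c k xs j)"
  by (induction xs arbitrary: j) auto

lemma block_entry_comp:
  assumes "f 0 = 0"
  shows "block_entry (\<lambda>x. f (c x)) k xs = (\<lambda>j. f (block_entry c k xs j))"
proof
  show "block_entry (\<lambda>x. f (c x)) k xs j = f (block_entry c k xs j)" for j
    using assms by (induction xs arbitrary: j) auto
qed

theorem proposition2:
  fixes m r p q :: nat
    and nn :: "nat \<Rightarrow> nat"
    and \<theta> \<alpha> \<gamma> :: "nat \<Rightarrow> real"
    and \<beta> :: real
    and L U :: "real mat"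
  assumes m: "m \<ge> 2"
    and nn_pos: "\<forall>i<m. nn i \<ge> 1"
    and U_dim: "U \<in> carrier_mat r m"
    and U_rank: "vec_space.rank r U = r"
    and U_one: "U *\<^sub>v vec m (\<lambda>_. 1) = 0\<^sub>v r"
    and L_def: "L = transpose_mat U * U"
    and L_null: "mat_kernel L = {c \<cdot>\<^sub>v vec m (\<lambda>_. 1) | c. True}"
    and \<beta>_pos: "\<beta> > 0"
    and \<theta>_range: "\<forall>i<m. 0 < \<theta> i \<and> \<theta> i < 2"
    and \<alpha>_pos: "\<forall>i<m. \<alpha> i > 0"
    and \<gamma>_pos: "\<forall>i<m. \<gamma> i > 0"
    and step: "\<forall>i<m. 0 < \<gamma> i * \<beta> \<and> \<gamma> i * \<beta> < 1 / lambda_max L"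
  shows
    "let n = (\<Sum>i<m. nn i); d = p + q;
         \<Theta> = diag_block_mat (map (\<lambda>i. \<theta> i \<cdot>\<^sub>m 1\<^sub>m (nn i)) [0..<m]);
         \<Upsilon>inv = diag_block_mat (map (\<lambda>i. (1 / \<alpha> i) \<cdot>\<^sub>m 1\<^sub>m (nn i)) [0..<m]);
         \<Gamma> = diag_block_mat (map (\<lambda>i. \<gamma> i \<cdot>\<^sub>m 1\<^sub>m d) [0..<m]);
         \<Gamma>inv = diag_block_mat (map (\<lambda>i. (1 / \<gamma> i) \<cdot>\<^sub>m 1\<^sub>m d) [0..<m]);
         UU = kron U (1\<^sub>m d);
         Q = block3 \<Upsilon>inv (0\<^sub>m n (m * d)) (0\<^sub>m n (r * d))
                    (0\<^sub>m (m * d) n) \<Gamma>inv (- transpose_mat UU)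
                    (0\<^sub>m (r * d) n) (0\<^sub>m (r * d) (m * d)) ((1 / \<beta>) \<cdot>\<^sub>m 1\<^sub>m (r * d));
         M = block3 \<Theta> (0\<^sub>m n (m * d)) (0\<^sub>m n (r * d))
                    (0\<^sub>m (m * d) n) (1\<^sub>m (m * d)) (- (\<Gamma> * transpose_mat UU))
                    (0\<^sub>m (r * d) n) (0\<^sub>m (r * d) (m * d)) (1\<^sub>m (r * d));
         H = Q * mat_inv M;
         D = transpose_mat Q + Q - transpose_mat M * H * M
     in invertible_mat M \<and> loewner_ge H D \<and> pd D"
proof -
  define n d where "n = (\<Sum>i<m. nn i)" and "d = p + q"
  define th al ga where "th = block_entry \<theta> nn [0..<m]" and "al = block_entry \<alpha> nn [0..<m]"
    and "ga = block_entry \<gamma> (\<lambda>_. d) [0..<m]"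
  define W S where "W = kron U (1\<^sub>m d)" and "S = (1 / \<beta>) \<cdot>\<^sub>m 1\<^sub>m (r * d)"
  have sums: "sum_list (map nn [0..<m]) = n" "sum_list (map (\<lambda>_. d) [0..<m]) = m * d"
    unfolding n_def by (simp_all add: sum_list_triv atLeast0LessThan sum_set_upt_conv_sum_list_nat[symmetric])
  have th: "0 < th j \<and> th j < 2" if "j < n" for j
    unfolding th_def by (rule block_entry_pred[where P = "\<lambda>x. 0 < x \<and> x < 2"])
      (use that \<theta>_range sums in auto)
  have al: "0 < al j" if "j < n" for j
    unfolding al_def by (rule block_entry_pred[where P = "\<lambda>x. 0 < x"]) (use that \<alpha>_pos sums in auto)
  have ga: "0 < ga j \<and> ga j * \<beta> < 1 / lambda_max L" if "j < m * d" for j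
    unfolding ga_def by (rule block_entry_pred[where P = "\<lambda>x. 0 < x \<and> x * \<beta> < 1 / lambda_max L"])
      (use that \<gamma>_pos step sums in auto)
  have "0 < \<gamma> 0 * \<beta> \<and> \<gamma> 0 * \<beta> < 1 / lambda_max L" using step m by simp
  then have "0 < 1 / lambda_max L" by linarith
  then have lam: "0 < lambda_max L" by simp
  have W: "W \<in> carrier_mat (r * d) (m * d)" unfolding W_def using U_dim by (simp add: kron_def)
  have "pd (S - W * mat_diag (m * d) ga * transpose_mat W)"
    unfolding S_def W_def using lam ga unfolding L_def
    by (intro pd_smult_one_minus_kron_congruence[OF U_dim \<beta>_pos]) auto
  moreover have "S \<in> carrier_mat (r * d) (r * d)" "transpose_mat S = S"
    unfolding S_def smult_one_mat_eq_mat_diag by simp_all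
  moreover have "block_entry (\<lambda>i. 1 / \<alpha> i) nn [0..<m] = (\<lambda>j. 1 / al j)"
    "block_entry (\<lambda>i. 1 / \<gamma> i) (\<lambda>_. d) [0..<m] = (\<lambda>j. 1 / ga j)"
    unfolding al_def ga_def by (simp_all add: block_entry_comp[of "\<lambda>x. 1 / x"])
  ultimately show ?thesis
    using QM_block_loewner[where a = n and th = th and al = al and ga = ga, OF W _ _ th al] ga
    unfolding Let_def n_def[symmetric] d_def[symmetric] W_def[symmetric] S_def[symmetric]
      diag_block_mat_smult_one sums th_def[symmetric] ga_def[symmetric]
    by simp
qed

end
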